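(* Let $n$ be a positive integer and let $G$ be a pure $(2n+1)$-sparse gapset of genus $g=3n+2$ with depth $q$. Then $q\le 3$. In particular, if $G$ is pseudo-symmetric, then $q=3$.
   Context: A gapset is a finite set $G\subset\mathbb{N}=\{1,2,\dots\}$ such that whenever $z\in G$ and $z=x+y$ with $x,y\in\mathbb{N}$, then $x\in G$ or $y\in G$; its genus is $g=\#G$. Writing $G=\{\ell_1<\dots<\ell_g\}$: multiplicity $m(G)=\min\{s\in\mathbb{N}:s\notin G\}$; conductor $c(G)=\min\{s\in\mathbb{N}: s+t\notin G\ \forall t\in\mathbb{N}_0\}$; Frobenius number $F(G)=c(G)-1=\ell_g$; depth $q(G)=\lceil c(G)/m(G)\rceil$. $G$ is pseudo-symmetric if $F(G)=2g-2$. $G$ is pure $\kappa$-sparse if $\ell_{i+1}-\ell_i\le\kappa$ for all $i$ with equality for some $i$. *)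

theory Defs
  imports Complex_Main
begin

definition gapset :: "nat set \<Rightarrow> bool" where
  "gapset G \<longleftrightarrow> finite G \<and> 0 \<notin> G \<and>
     (\<forall>z\<in>G. \<forall>x y. x \<ge> 1 \<and> y \<ge> 1 \<and> z = x + y \<longrightarrow> x \<in> G \<or> y \<in> G)"

definition genus :: "nat set \<Rightarrow> nat" where
  "genus G = card G"

definition multiplicity :: "nat set \<Rightarrow> nat" where
  "multiplicity G = (LEAST s. s \<ge> 1 \<and> s \<notin> G)"

definition conductor :: "nat set \<Rightarrow> nat" where
  "conductor G = (LEAST s. s \<ge> 1 \<and> (\<forall>t::nat. s + t \<notin> G))"

definition frobenius :: "nat set \<Rightarrow> nat" where
  "frobenius G = conductor G - 1"

definition depth :: "nat set \<Rightarrow> nat" where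
  "depth G = nat \<lceil>real (conductor G) / real (multiplicity G)\<rceil>"

definition pseudo_symmetric :: "nat set \<Rightarrow> bool" where
  "pseudo_symmetric G \<longleftrightarrow> int (frobenius G) = 2 * int (genus G) - 2"

text \<open>Elements listed increasingly: l_1 < ... < l_g is sorted_list_of_set G (0-indexed).\<close>
definition pure_sparse :: "nat \<Rightarrow> nat set \<Rightarrow> bool" where
  "pure_sparse \<kappa> G \<longleftrightarrow>
     (let L = sorted_list_of_set G in
       (\<forall>i. i + 1 < length L \<longrightarrow> L ! (i+1) - L ! i \<le> \<kappa>) \<and>
       (\<exists>i. i + 1 < length L \<and> L ! (i+1) - L ! i = \<kappa>))"

end

theory Submission
  imports Defs
begin

text \<open>Let \<open>m\<close> be the multiplicity and \<open>a < b = a + 2n + 1\<close> consecutive elements of \<open>G\<close>.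
Since \<open>b - m\<close> would otherwise lie in \<open>G\<close> strictly between \<open>a\<close> and \<open>b\<close>, we get \<open>m \<ge> 2n + 1\<close>.
The Frobenius number of any gapset is at most \<open>2g - 1 = 6n + 3 \<le> 3m\<close>, and \<open>3m \<notin> G\<close>, so
\<open>c \<le> 3m\<close> and \<open>q \<le> 3\<close>. If \<open>G\<close> is pseudo-symmetric then \<open>c = 6n + 3\<close>, and \<open>q = 3\<close> amounts to
\<open>m < g\<close>. Otherwise \<open>G = {1, \<dots>, m - 1} \<union> {F}\<close> with \<open>m = g\<close>, whose only jump
\<open>F - (g - 1) = 3n + 1\<close> is not \<open>2n + 1\<close>.\<close>

lemma gapset_finite: "gapset G \<Longrightarrow> finite G"
  and gapset_zero_notin: "gapset G \<Longrightarrow> 0 \<notin> G"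
  unfolding gapset_def by blast+

lemma gapset_add_notin:
  assumes "gapset G" "x \<notin> G" "y \<notin> G" "x \<ge> 1" "y \<ge> 1"
  shows "x + y \<notin> G"
  using assms unfolding gapset_def by blast

lemma gapset_diff_mem:
  assumes "gapset G" "z \<in> G" "s \<notin> G" "s \<ge> 1" "s < z"
  shows "z - s \<in> G"
  using gapset_add_notin[OF assms(1,3), of "z - s"] assms by force

lemma multiplicity_props:
  assumes "gapset G"
  shows multiplicity_ge_1: "multiplicity G \<ge> 1"
    and multiplicity_notin: "multiplicity G \<notin> G"
    and mem_below_multiplicity: "\<And>s. 1 \<le> s \<Longrightarrow> s < multiplicity G \<Longrightarrow> s \<in> G"
proof -
  obtain k where "\<forall>x\<in>G. x \<le> k"
    using gapset_finite[OF assms] finite_nat_set_iff_bounded_le by blast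
  then have "Suc k \<ge> 1 \<and> Suc k \<notin> G" by auto
  then have "multiplicity G \<ge> 1 \<and> multiplicity G \<notin> G"
    unfolding multiplicity_def by (rule LeastI)
  then show "multiplicity G \<ge> 1" "multiplicity G \<notin> G" by auto
  show "\<And>s. 1 \<le> s \<Longrightarrow> s < multiplicity G \<Longrightarrow> s \<in> G"
    unfolding multiplicity_def using not_less_Least by blast
qed

lemma mult_multiplicity_notin:
  assumes "gapset G" "k \<ge> 1"
  shows "k * multiplicity G \<notin> G"
proof -
  let ?m = "multiplicity G"
  have "Suc j * ?m \<notin> G" for j
  proof (induction j)
    case 0
    show ?case using multiplicity_notin[OF assms(1)] by simp
  next
    case (Suc j)
    have "Suc j * ?m \<ge> 1" using multiplicity_ge_1[OF assms(1)] by simp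
    then have "?m + Suc j * ?m \<notin> G"
      using gapset_add_notin[OF assms(1) multiplicity_notin[OF assms(1)] Suc]
        multiplicity_ge_1[OF assms(1)] by blast
    then show ?case by simp
  qed
  from this[of "k - 1"] show ?thesis using assms(2) by simp
qed

lemma conductor_eq_Suc_Max:
  assumes "gapset G" "G \<noteq> {}"
  shows "conductor G = Max G + 1"
  unfolding conductor_def
proof (rule Least_equality)
  show "1 \<le> Max G + 1 \<and> (\<forall>t. Max G + 1 + t \<notin> G)"
    using Max_ge[OF gapset_finite[OF assms(1)]] by fastforce
next
  fix y assume y: "1 \<le> y \<and> (\<forall>t. y + t \<notin> G)"
  have "Max G \<in> G" using Max_in[OF gapset_finite[OF assms(1)] assms(2)] .
  then have "\<not> y \<le> Max G" using y le_add_diff_inverse by metis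
  then show "Max G + 1 \<le> y" by simp
qed


lemma frobenius_eq_Max:
  "gapset G \<Longrightarrow> G \<noteq> {} \<Longrightarrow> frobenius G = Max G"
  by (simp add: frobenius_def conductor_eq_Suc_Max)

text \<open>The map \<open>s \<mapsto> F - s\<close> injects the non-elements below \<open>F\<close> into the elements below \<open>F\<close>.\<close>

lemma Max_less_twice_genus:
  assumes "gapset G" "G \<noteq> {}"
  shows "Max G < 2 * card G"
proof -
  define F where "F = Max G"
  have fin: "finite G" using gapset_finite[OF assms(1)] .
  have FG: "F \<in> G" unfolding F_def using Max_in[OF fin assms(2)] .
  define A where "A = {1..<F}"
  have "(\<lambda>s. F - s) ` (A - G) \<subseteq> A \<inter> G"
    using gapset_diff_mem[OF assms(1) FG] unfolding A_def by fastforce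
  moreover have "inj_on (\<lambda>s. F - s) (A - G)"
    unfolding A_def by (rule inj_onI) auto
  ultimately have "card (A - G) \<le> card (A \<inter> G)"
    using card_inj_on_le unfolding A_def by blast
  moreover have "card A = card (A \<inter> G) + card (A - G)"
    unfolding A_def by (metis card_Int_Diff finite_atLeastLessThan)
  moreover have "A \<inter> G \<subseteq> G - {F}" unfolding A_def by auto
  then have "card (A \<inter> G) \<le> card G - 1"
    using card_mono[OF _ \<open>A \<inter> G \<subseteq> G - {F}\<close>] FG fin by simp
  ultimately have "F - 1 \<le> 2 * card G - 2" unfolding A_def by simp
  moreover have "F \<ge> 1" using FG gapset_zero_notin[OF assms(1)] by (cases F) auto
  moreover have "card G \<ge> 1" using FG fin card_0_eq by fastforce
  ultimately show ?thesis unfolding F_def by linarith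
qed

lemma depth_le_iff:
  assumes "gapset G"
  shows "depth G \<le> k \<longleftrightarrow> conductor G \<le> k * multiplicity G"
proof -
  have "real (multiplicity G) > 0" using multiplicity_ge_1[OF assms] by simp
  then have "real (conductor G) / real (multiplicity G) \<le> real k
             \<longleftrightarrow> conductor G \<le> k * multiplicity G"
    by (simp add: divide_le_eq flip: of_nat_mult)
  then show ?thesis
    unfolding depth_def by (simp add: ceiling_le_iff nat_le_iff)
qed


definition consecutive_in :: "nat set \<Rightarrow> nat \<Rightarrow> nat \<Rightarrow> bool" where
  "consecutive_in G a b \<longleftrightarrow> a \<in> G \<and> b \<in> G \<and> a < b \<and> (\<forall>x\<in>G. a < x \<longrightarrow> b \<le> x)"

lemma pure_sparse_obtains_consecutive:
  assumes "finite G" "pure_sparse \<kappa> G"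
  obtains a where "consecutive_in G a (a + \<kappa>)"
proof -
  define L where "L = sorted_list_of_set G"
  have Ls: "sorted_wrt (<) L" unfolding L_def by (simp add: strict_sorted_list_of_set)
  have Lset: "set L = G" unfolding L_def using assms(1) by simp
  obtain i where i: "i + 1 < length L" "L!(i+1) - L!i = \<kappa>"
    using assms(2) unfolding pure_sparse_def Let_def L_def by blast
  have less: "L!i < L!(i+1)" using sorted_wrt_nth_less[OF Ls, of i "i+1"] i(1) by simp
  have next_le: "L!(i+1) \<le> x" if x: "x \<in> G" "L!i < x" for x
  proof -
    obtain j where j: "j < length L" "L!j = x" using x(1) Lset by (metis in_set_conv_nth)
    have "i < j"
    proof (rule ccontr)
      assume "\<not> i < j"
      then have "L!j \<le> L!i"
        using sorted_wrt_nth_less[OF Ls, of j i] i(1) by (cases "j = i") auto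
      then show False using j(2) x(2) by simp
    qed
    then show ?thesis
      using sorted_wrt_nth_less[OF Ls, of "i+1" j] j by (cases "i + 1 = j") auto
  qed
  have "L!i \<in> G" "L!(i+1) \<in> G" using i(1) Lset nth_mem[of _ L] by simp_all
  moreover have "L!(i+1) = L!i + \<kappa>" using less i(2) by simp
  ultimately have "consecutive_in G (L!i) (L!i + \<kappa>)"
    unfolding consecutive_in_def using next_le less by simp
  then show ?thesis by (rule that)
qed

lemma consecutive_diff_le_multiplicity:
  assumes "gapset G" "consecutive_in G a b"
  shows "b - a \<le> multiplicity G"
proof (rule ccontr)
  let ?m = "multiplicity G"
  assume "\<not> b - a \<le> ?m"
  moreover have "b \<in> G" using assms(2) unfolding consecutive_in_def by blast
  ultimately have "b - ?m \<in> G"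
    using gapset_diff_mem[OF assms(1) _ multiplicity_notin multiplicity_ge_1] assms(1) by simp
  then have "b \<le> b - ?m"
    using assms(2) \<open>\<not> b - a \<le> ?m\<close> unfolding consecutive_in_def by auto
  then show False using multiplicity_ge_1[OF assms(1)] \<open>\<not> b - a \<le> ?m\<close> by simp
qed

lemma mem_less_multiplicity_if_genus_le:
  assumes "gapset G" "card G \<le> multiplicity G" "x \<in> G" "x \<noteq> Max G"
  shows "x < multiplicity G"
proof (rule ccontr)
  let ?m = "multiplicity G" and ?S = "insert (Max G) (insert x {1..<multiplicity G})"
  have fin: "finite G" using gapset_finite[OF assms(1)] .
  assume "\<not> x < ?m"
  moreover have "Max G \<in> G" "x \<le> Max G" using Max_in[OF fin] Max_ge[OF fin] assms(3) by auto
  ultimately have "card ?S = ?m + 1"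
    using assms(4) multiplicity_ge_1[OF assms(1)] by simp
  moreover have "?S \<subseteq> G"
    using \<open>Max G \<in> G\<close> assms(3) mem_below_multiplicity[OF assms(1)] by auto
  then have "card ?S \<le> card G" by (rule card_mono[OF fin])
  ultimately show False using assms(2) by simp
qed

lemma consecutive_jump_if_genus_le_multiplicity:
  assumes "gapset G" "card G \<le> multiplicity G" "consecutive_in G a b" "a + 2 \<le> b"
  shows "a + 1 = multiplicity G" "b = Max G" "card G = multiplicity G"
proof -
  let ?m = "multiplicity G"
  have ab: "a \<in> G" "b \<in> G" "\<And>x. x \<in> G \<Longrightarrow> a < x \<Longrightarrow> b \<le> x"
    using assms(3) unfolding consecutive_in_def by auto
  have "?m \<le> a + 1"
  proof (rule ccontr)
    assume "\<not> ?m \<le> a + 1"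
    then have "a + 1 \<in> G" using mem_below_multiplicity[OF assms(1)] by simp
    then show False using ab(3) assms(4) by fastforce
  qed
  show b: "b = Max G"
  proof (rule ccontr)
    assume "b \<noteq> Max G"
    then have "b < ?m" using mem_less_multiplicity_if_genus_le[OF assms(1,2) ab(2)] by simp
    then show False using \<open>?m \<le> a + 1\<close> assms(4) by simp
  qed
  have "a < ?m"
    using mem_less_multiplicity_if_genus_le[OF assms(1,2) ab(1)] assms(4) b by simp
  with \<open>?m \<le> a + 1\<close> show m: "a + 1 = ?m" by simp
  have "G \<subseteq> insert b {1..<?m}"
  proof
    fix x assume "x \<in> G"
    then have "x = b \<or> x < ?m" using mem_less_multiplicity_if_genus_le[OF assms(1,2)] b by blast
    then show "x \<in> insert b {1..<?m}"
      using \<open>x \<in> G\<close> gapset_zero_notin[OF assms(1)] by (cases x) auto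
  qed
  moreover have "{1..<?m} \<subseteq> G" using mem_below_multiplicity[OF assms(1)] by auto
  ultimately have "G = insert b {1..<?m}" using ab(2) by blast
  moreover have "card (insert b {1..<?m}) = ?m" using m assms(4) by simp
  ultimately show "card G = ?m" by simp
qed


theorem mainTheorem14:
  fixes n :: nat and G :: "nat set"
  assumes "n \<ge> 1"
    and "gapset G"
    and "pure_sparse (2*n+1) G"
    and "genus G = 3*n+2"
  shows "depth G \<le> 3 \<and> (pseudo_symmetric G \<longrightarrow> depth G = 3)"
proof -
  have g: "card G = 3*n+2" using assms(4) by (simp add: genus_def)
  then have ne: "G \<noteq> {}" by auto
  have c: "conductor G = Max G + 1" using conductor_eq_Suc_Max[OF assms(2) ne] .
  obtain a where jump: "consecutive_in G a (a + (2*n+1))"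
    using pure_sparse_obtains_consecutive[OF gapset_finite[OF assms(2)] assms(3)] .
  have m: "2*n+1 \<le> multiplicity G"
    using consecutive_diff_le_multiplicity[OF assms(2) jump] by simp
  have "Max G \<noteq> 3 * multiplicity G"
    using mult_multiplicity_notin[OF assms(2)] Max_in[OF gapset_finite[OF assms(2)] ne] by force
  then have "Max G < 3 * multiplicity G"
    using Max_less_twice_genus[OF assms(2) ne] g m by linarith
  then have depth_le_3: "depth G \<le> 3" using depth_le_iff[OF assms(2)] c by simp
  moreover have "depth G = 3" if "pseudo_symmetric G"
  proof -
    have F: "Max G = 6*n+2"
      using that g frobenius_eq_Max[OF assms(2) ne] by (simp add: pseudo_symmetric_def genus_def)
    have "\<not> card G \<le> multiplicity G"
      using consecutive_jump_if_genus_le_multiplicity[OF assms(2) _ jump] F g assms(1) by force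
    then have "\<not> depth G \<le> 2" using depth_le_iff[OF assms(2)] c F g by simp
    then show ?thesis using depth_le_3 by simp
  qed
  ultimately show ?thesis by blast
qed

end
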